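(* Let $k, r, a, b, m, n$ be integers satisfying $$k\geq 1,\quad 0\leq a\leq m,\quad n\geq km-r,\quad \max\{0,ka-r\}\leq b\leq n.$$ Let $L_{k,r}(a,b;m,n)$ be the set of lattice paths from $(a,b)$ to $(m,n)$ with unit steps $(1,0)$ and $(0,1)$ that stay weakly above the line $y=kx-r$. Then $$|L_{k,r}(a,b;m,n)|=\sum_{i=0}^{\lfloor\frac{b+r-ka}{k+1}\rfloor}(-1)^i\,\frac{n+r+1-km}{n+r+1-k(a+i)}\binom{m+n+r-(k+1)(a+i)}{m-a-i}\binom{b+r-k(a+i)}{i}.$$
   Context: Lattice paths use unit steps $(1,0)$ and $(0,1)$. A path stays weakly above the line $y=qx-r$ if every lattice point $(x,y)$ on it satisfies $y\geq qx-r$. $\lfloor x\rfloor$ is the largest integer not exceeding $x$. Binomial coefficients $\binom{N}{j}$ with $N\ge 0$ are the usual ones and equal $0$ when $j<0$ or $j>N$. *)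

theory Defs
  imports Complex_Main
begin

text \<open>A lattice path is represented by the list of lattice points it visits, in order.
  Consecutive points differ by a unit step (1,0) or (0,1).\<close>
definition lattice_paths :: "int \<times> int \<Rightarrow> int \<times> int \<Rightarrow> (int \<times> int) list set" where
  "lattice_paths P Q = {ps. ps \<noteq> [] \<and> hd ps = P \<and> last ps = Q \<and>
     (\<forall>i. Suc i < length ps \<longrightarrow>
        ps ! Suc i = (fst (ps ! i) + 1, snd (ps ! i)) \<or>
        ps ! Suc i = (fst (ps ! i), snd (ps ! i) + 1))}"

definition L :: "int \<Rightarrow> int \<Rightarrow> int \<Rightarrow> int \<Rightarrow> int \<Rightarrow> int \<Rightarrow> (int \<times> int) list set" where
  "L q r a b m n = {ps \<in> lattice_paths (a, b) (m, n). \<forall>(x, y) \<in> set ps. y \<ge> q * x - r}"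

definition ibinom :: "int \<Rightarrow> int \<Rightarrow> int" where
  "ibinom N j = (if j < 0 \<or> j > N then 0 else int (nat N choose nat j))"

end

theory Submission
  imports Defs
begin

text \<open>
  Let \<open>f(a, b)\<close> count the admissible paths from \<open>(a, b)\<close> to \<open>(m, n)\<close>. Deleting the first
  step gives \<open>f(a, b - 1) = f(a + 1, b - 1) + f(a, b)\<close> whenever \<open>(a, b - 1)\<close> lies weakly above
  the line. Iterating this until the starting point reaches the line \<open>y = k x - r\<close> writes \<open>f(a, b)\<close>
  as an alternating sum of the values at the line points \<open>(a + i, k (a + i) - r)\<close>, weighted by
  \<open>C(b + r - k (a + i), i)\<close>; these weights vanish once \<open>(k + 1) i > b + r - k a\<close>. From a line
  point \<open>(x, k x - r)\<close> the count is the generalized ballot number \<open>C(s + t, t) - k C(s + t, t - 1)\<close>,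
  where \<open>t = m - x\<close> and \<open>s = n + r - k x\<close>: deleting the last step shows that both satisfy the
  same Pascal recursion in the end point, and the ballot number vanishes just below the line.
  Binomial absorption turns it into \<open>(s + 1 - k t) / (s + 1) C(s + t, t)\<close>.
\<close>

definition unit_step :: "int \<times> int \<Rightarrow> int \<times> int \<Rightarrow> bool" where
  "unit_step p q \<longleftrightarrow> q = (fst p + 1, snd p) \<or> q = (fst p, snd p + 1)"

lemma successively_unit_step_hd_last:
  assumes "successively unit_step ps" "ps \<noteq> []"
  shows "fst (hd ps) \<le> fst (last ps)" "snd (hd ps) \<le> snd (last ps)"
    and "fst (hd ps) + snd (hd ps) + int (length ps) = fst (last ps) + snd (last ps) + 1"
  using assms by (induction ps rule: induct_list012) (auto simp: unit_step_def)

lemma L_iff: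
  "ps \<in> L q r a b m n \<longleftrightarrow> ps \<noteq> [] \<and> hd ps = (a, b) \<and> last ps = (m, n) \<and>
     successively unit_step ps \<and>
     (\<forall>(x, y) \<in> set ps. q * x - r \<le> y)"
  unfolding L_def lattice_paths_def successively_conv_nth unit_step_def by auto

lemma L_empty_if_start_below: "b < q * a - r \<Longrightarrow> L q r a b m n = {}"
  using hd_in_set by (fastforce simp: L_iff)

lemma L_empty_if_end_below: "n < q * m - r \<Longrightarrow> L q r a b m n = {}"
  using last_in_set by (fastforce simp: L_iff)

lemma L_empty_if_not_le: "m < a \<or> n < b \<Longrightarrow> L q r a b m n = {}"
  using successively_unit_step_hd_last by (fastforce simp: L_iff)

lemma L_singleton:
  assumes "q * a - r \<le> b"
  shows "L q r a b a b = {[(a, b)]}"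
proof -
  have "ps = [(a, b)]" if "ps \<in> L q r a b a b" for ps
  proof -
    from that have "ps \<noteq> []" "hd ps = (a, b)" "last ps = (a, b)" "successively unit_step ps"
      by (auto simp: L_iff)
    with successively_unit_step_hd_last(3)[of ps] show ?thesis by (cases ps) auto
  qed
  with assms show ?thesis by (auto simp: L_iff)
qed

lemma L_first_step:
  assumes "(a, b) \<noteq> (m, n)" "q * a - r \<le> b"
  shows "L q r a b m n = Cons (a, b) ` (L q r (a + 1) b m n \<union> L q r a (b + 1) m n)"
proof (intro equalityI subsetI)
  fix ps assume ps: "ps \<in> L q r a b m n"
  then obtain ps' where ps_eq: "ps = (a, b) # ps'" by (cases ps) (auto simp: L_iff)
  with ps assms(1) have "ps' \<noteq> []" by (auto simp: L_iff)
  with ps ps_eq have "unit_step (a, b) (hd ps')" "ps' \<in> L q r (fst (hd ps')) (snd (hd ps')) m n"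
    by (auto simp: L_iff successively_Cons)
  then show "ps \<in> Cons (a, b) ` (L q r (a + 1) b m n \<union> L q r a (b + 1) m n)"
    using ps_eq by (cases "hd ps'") (auto simp: unit_step_def)
next
  fix ps assume "ps \<in> Cons (a, b) ` (L q r (a + 1) b m n \<union> L q r a (b + 1) m n)"
  then obtain ps' where "ps = (a, b) # ps'" "ps' \<noteq> []" "unit_step (a, b) (hd ps')"
      "last ps' = (m, n)" "successively unit_step ps'" "\<forall>(x, y) \<in> set ps'. q * x - r \<le> y"
    by (auto simp: L_iff unit_step_def)
  with assms(2) show "ps \<in> L q r a b m n"
    by (cases ps') (auto simp: L_iff)
qed

lemma L_last_step:
  assumes "(a, b) \<noteq> (m, n)" "q * m - r \<le> n"
  shows "L q r a b m n = (\<lambda>ps. ps @ [(m, n)]) ` (L q r a b (m - 1) n \<union> L q r a b m (n - 1))"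
proof (intro equalityI subsetI)
  fix ps assume ps: "ps \<in> L q r a b m n"
  define ps' where "ps' = butlast ps"
  have ps_eq: "ps = ps' @ [(m, n)]"
    using ps by (metis L_iff append_butlast_last_id ps'_def)
  with ps assms(1) have "ps' \<noteq> []" by (auto simp: L_iff)
  with ps ps_eq have "unit_step (last ps') (m, n)" "ps' \<in> L q r a b (fst (last ps')) (snd (last ps'))"
    by (auto simp: L_iff successively_append_iff hd_append)
  then show "ps \<in> (\<lambda>ps. ps @ [(m, n)]) ` (L q r a b (m - 1) n \<union> L q r a b m (n - 1))"
    using ps_eq by (cases "last ps'") (auto simp: unit_step_def)
next
  fix ps assume "ps \<in> (\<lambda>ps. ps @ [(m, n)]) ` (L q r a b (m - 1) n \<union> L q r a b m (n - 1))"
  then obtain ps' where "ps = ps' @ [(m, n)]" "ps' \<noteq> []" "hd ps' = (a, b)" "successively unit_step ps'"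
      "unit_step (last ps') (m, n)" "\<forall>(x, y) \<in> set ps'. q * x - r \<le> y"
    by (auto simp: L_iff unit_step_def)
  with assms(2) show "ps \<in> L q r a b m n"
    by (auto simp: L_iff successively_append_iff hd_append)
qed

lemma finite_L: "finite (L q r a b m n)"
proof (induction "nat (m + n - a - b)" arbitrary: a b rule: less_induct)
  case less
  consider "b < q * a - r \<or> m < a \<or> n < b" | "(a, b) = (m, n)" "q * a - r \<le> b"
    | "(a, b) \<noteq> (m, n)" "q * a - r \<le> b" "a \<le> m" "b \<le> n"
    by fastforce
  then show ?case
  proof cases
    case 3
    then have "finite (L q r (a + 1) b m n)" "finite (L q r a (b + 1) m n)"
      by (auto intro!: less)
    with 3 show ?thesis by (simp add: L_first_step)
  qed (auto simp: L_empty_if_start_below L_empty_if_not_le L_singleton)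
qed

lemma card_L_first_step:
  assumes "(a, b) \<noteq> (m, n)" "q * a - r \<le> b"
  shows "card (L q r a b m n) = card (L q r (a + 1) b m n) + card (L q r a (b + 1) m n)"
proof -
  have "L q r (a + 1) b m n \<inter> L q r a (b + 1) m n = {}" by (auto simp: L_iff)
  then show ?thesis
    unfolding L_first_step[OF assms] by (simp add: card_image finite_L card_Un_disjoint)
qed

lemma card_L_last_step:
  assumes "(a, b) \<noteq> (m, n)" "q * m - r \<le> n"
  shows "card (L q r a b m n) = card (L q r a b (m - 1) n) + card (L q r a b m (n - 1))"
proof -
  have "L q r a b (m - 1) n \<inter> L q r a b m (n - 1) = {}" by (auto simp: L_iff)
  moreover have "inj (\<lambda>ps. ps @ [(m, n)])" by (rule injI) simp
  ultimately show ?thesis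
    unfolding L_last_step[OF assms]
    by (simp add: card_image inj_on_subset[of _ UNIV] finite_L card_Un_disjoint)
qed

lemma ibinom_eq_0: "j < 0 \<or> N < j \<Longrightarrow> ibinom N j = 0"
  by (auto simp: ibinom_def)

lemma ibinom_eq_binomial: "0 \<le> N \<Longrightarrow> 0 \<le> j \<Longrightarrow> ibinom N j = int (nat N choose nat j)"
  by (auto simp: ibinom_def binomial_eq_0 nat_less_eq_zless)

lemma ibinom_Pascal:
  assumes "N \<noteq> 0 \<or> j \<noteq> 0"
  shows "ibinom N j = ibinom (N - 1) j + ibinom (N - 1) (j - 1)"
proof (cases "0 < j \<and> j \<le> N")
  case True
  define N' j' where "N' = nat (N - 1)" and "j' = nat (j - 1)"
  have "nat N = Suc N'" "nat j = Suc j'" "nat (N - 1) = N'" "nat (j - 1) = j'"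
    using True by (auto simp: N'_def j'_def)
  with True show ?thesis by (simp add: ibinom_eq_binomial)
next
  case False
  with assms show ?thesis
    by (cases "j = 0") (auto simp: ibinom_def)
qed

lemma ibinom_absorption:
  assumes "0 \<le> s"
  shows "(s + 1) * ibinom (s + t) (t - 1) = t * ibinom (s + t) t"
proof (cases "0 < t")
  case True
  define s' t' where "s' = nat s" and "t' = nat (t - 1)"
  have st: "s = int s'" "t = int (Suc t')"
    using assms True by (simp_all add: s'_def t'_def)
  have "nat (s + t) = Suc (t' + s')" "nat (t - 1) = t'" "nat t = Suc t'"
    using st by simp_all
  then have "ibinom (s + t) (t - 1) = int (Suc (t' + s') choose t')"
    and "ibinom (s + t) t = int (Suc (t' + s') choose Suc t')"
    using st by (simp_all add: ibinom_eq_binomial del: binomial_Suc_Suc)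
  moreover have "int (Suc s') * int (Suc (t' + s') choose t') =
      int (Suc t') * int (Suc (t' + s') choose Suc t')"
    using Suc_times_binomial_add[of t' s'] by (metis of_nat_mult)
  moreover have "s + 1 = int (Suc s')" using st by simp
  ultimately show ?thesis using st(2) by metis
qed (cases "t = 0", auto simp: ibinom_eq_0)

definition ballot_number :: "int \<Rightarrow> int \<Rightarrow> int \<Rightarrow> int \<Rightarrow> int \<Rightarrow> int" where
  "ballot_number k r x m n =
     ibinom (m + n + r - (k + 1) * x) (m - x) - k * ibinom (m + n + r - (k + 1) * x) (m - x - 1)"

lemma ballot_number_Pascal:
  assumes "m + n + r - (k + 1) * x \<noteq> 0"
  shows "ballot_number k r x m n = ballot_number k r x (m - 1) n + ballot_number k r x m (n - 1)"
proof -
  define N where "N = m + n + r - (k + 1) * x"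
  have "m - 1 + n + r - (k + 1) * x = N - 1" "m + (n - 1) + r - (k + 1) * x = N - 1"
    by (simp_all add: N_def)
  moreover have "N \<noteq> 0" using assms by (simp add: N_def)
  ultimately show ?thesis
    unfolding ballot_number_def N_def[symmetric]
    by (simp add: ibinom_Pascal[of N] algebra_simps)
qed

lemma ballot_number_below_line:
  assumes "1 \<le> k" "x < m"
  shows "ballot_number k r x m (k * m - r - 1) = 0"
proof -
  define s t where "s = k * (m - x) - 1" and "t = m - x"
  have "1 \<le> k * t" using assms mult_mono[of 1 k 1 t] by (simp add: t_def)
  then have "k * t * ibinom (s + t) (t - 1) = t * ibinom (s + t) t"
    using ibinom_absorption[of s t] by (simp add: s_def t_def)
  then have "k * ibinom (s + t) (t - 1) = ibinom (s + t) t"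
    using assms by (simp add: t_def)
  moreover have N_eq: "m + (k * m - r - 1) + r - (k + 1) * x = s + t"
    by (simp add: s_def t_def algebra_simps)
  ultimately show ?thesis
    unfolding ballot_number_def N_eq t_def[symmetric] by simp
qed

lemma card_L_from_line:
  assumes "1 \<le> k" "k * m - r \<le> n"
  shows "int (card (L k r x (k * x - r) m n)) = ballot_number k r x m n"
  using assms(2)
proof (induction "nat (m - x + n - (k * x - r))" arbitrary: m n rule: less_induct)
  case less
  consider "m < x" | "(m, n) = (x, k * x - r)" | "x \<le> m" "(m, n) \<noteq> (x, k * x - r)"
    by fastforce
  then show ?case
  proof cases
    case 1
    then show ?thesis by (simp add: L_empty_if_not_le ballot_number_def ibinom_eq_0)
  next
    case 2
    then have "m + n + r - (k + 1) * x = 0" by (simp add: algebra_simps)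
    with 2 show ?thesis by (simp add: L_singleton ballot_number_def ibinom_def)
  next
    case 3
    have "k * x \<le> k * m" using 3 assms(1) by simp
    then have measure_pos: "1 \<le> m - x + n - (k * x - r)" using 3 less.prems by auto
    have from_left: "int (card (L k r x (k * x - r) (m - 1) n)) = ballot_number k r x (m - 1) n"
      using measure_pos less.prems assms(1) by (intro less.hyps) (auto simp: algebra_simps)
    have from_below: "int (card (L k r x (k * x - r) m (n - 1))) = ballot_number k r x m (n - 1)"
    proof (cases "n = k * m - r")
      case True
      with 3 have "x < m" by auto
      with True assms(1) show ?thesis
        by (simp add: L_empty_if_end_below ballot_number_below_line)
    next
      case False
      with less.prems measure_pos show ?thesis by (intro less.hyps) auto
    qed
    have "m + n + r - (k + 1) * x \<noteq> 0" using measure_pos by (simp add: algebra_simps)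
    moreover have "card (L k r x (k * x - r) m n) =
        card (L k r x (k * x - r) (m - 1) n) + card (L k r x (k * x - r) m (n - 1))"
      using 3 less.prems by (intro card_L_last_step) auto
    ultimately show ?thesis using from_left from_below by (simp add: ballot_number_Pascal)
  qed
qed

lemma card_L_alternating_sum:
  fixes k r a b m n :: int
  assumes "0 \<le> k" "b \<le> n" "nat (b + r - k * a) < M"
  shows "int (card (L k r a b m n)) =
    (\<Sum>i<M. (-1) ^ i * ibinom (b + r - k * a - k * int i) (int i)
       * int (card (L k r (a + int i) (k * (a + int i) - r) m n)))"
  using assms(2,3)
proof (induction "nat (b + r - k * a)" arbitrary: a b M rule: less_induct)
  case less
  define D where "D x = int (card (L k r x (k * x - r) m n))" for x
  from less.prems obtain M' where M: "M = Suc M'" by (cases M) auto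
  consider "b + r - k * a < 0" | "b + r - k * a = 0" | "0 < b + r - k * a" by linarith
  then show ?case
  proof cases
    case 1
    have "ibinom (b + r - k * a - k * int i) (int i) = 0" for i
      using 1 mult_nonneg_nonneg[OF assms(1), of "int i"] by (intro ibinom_eq_0) linarith
    with 1 show ?thesis by (simp add: L_empty_if_start_below)
  next
    case 2
    have "ibinom (b + r - k * a - k * int (Suc i)) (int (Suc i)) = 0" for i
      using 2 mult_nonneg_nonneg[OF assms(1), of "int (Suc i)"] by (intro ibinom_eq_0) linarith
    moreover have "b = k * a - r" using 2 by simp
    ultimately show ?thesis
      unfolding M sum.lessThan_Suc_shift by (simp add: ibinom_def)
  next
    case 3
    have first_step: "int (card (L k r a b m n)) =
        int (card (L k r a (b - 1) m n)) - int (card (L k r (a + 1) (b - 1) m n))"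
      using card_L_first_step[of a "b - 1" m n k r] 3 less.prems by simp
    have below: "int (card (L k r a (b - 1) m n)) =
        (\<Sum>i<M. (-1) ^ i * ibinom (b - 1 + r - k * a - k * int i) (int i) * D (a + int i))"
      using 3 less.prems unfolding D_def by (intro less.hyps) auto
    have below_right: "int (card (L k r (a + 1) (b - 1) m n)) =
        (\<Sum>i<M'. (-1) ^ i * ibinom (b - 1 + r - k * (a + 1) - k * int i) (int i) * D (a + 1 + int i))"
      using 3 less.prems assms(1) unfolding D_def M by (intro less.hyps) (auto simp: algebra_simps)
    have "(\<Sum>i<M. (-1) ^ i * ibinom (b - 1 + r - k * a - k * int i) (int i - 1) * D (a + int i)) =
        - int (card (L k r (a + 1) (b - 1) m n))"
      unfolding below_right M sum.lessThan_Suc_shift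
      by (simp add: ibinom_eq_0 sum_negf[symmetric] algebra_simps)
    moreover have "ibinom (b + r - k * a - k * int i) (int i) =
        ibinom (b - 1 + r - k * a - k * int i) (int i) +
        ibinom (b - 1 + r - k * a - k * int i) (int i - 1)" for i
      using 3 ibinom_Pascal[of "b + r - k * a - k * int i" "int i"]
      by (cases "i = 0") (simp_all add: algebra_simps)
    ultimately show ?thesis
      unfolding first_step below D_def[symmetric]
      by (simp add: algebra_simps sum.distrib)
  qed
qed

lemma ballot_number_eq_quotient:
  assumes "k * x - r \<le> n"
  shows "real_of_int (ballot_number k r x m n) =
    real_of_int (n + r + 1 - k * m) / real_of_int (n + r + 1 - k * x)
    * real_of_int (ibinom (m + n + r - (k + 1) * x) (m - x))"
proof -
  define s t where "s = n + r - k * x" and "t = m - x"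
  have "0 \<le> s" using assms by (simp add: s_def)
  then have "real_of_int (s + 1) * real_of_int (ibinom (s + t) (t - 1)) =
      real_of_int t * real_of_int (ibinom (s + t) t)"
    by (metis ibinom_absorption of_int_mult)
  moreover have "0 < real_of_int (s + 1)" using \<open>0 \<le> s\<close> by simp
  ultimately have eq: "real_of_int (ibinom (s + t) t - k * ibinom (s + t) (t - 1)) =
      real_of_int (s + 1 - k * t) / real_of_int (s + 1) * real_of_int (ibinom (s + t) t)"
    by (simp add: field_simps)
  have N: "m + n + r - (k + 1) * x = s + t" and num: "n + r + 1 - k * m = s + 1 - k * t"
    and den: "n + r + 1 - k * x = s + 1"
    by (simp_all add: s_def t_def algebra_simps)
  show ?thesis
    unfolding ballot_number_def N num den t_def[symmetric] by (rule eq)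
qed

lemma le_floor_divide_iff:
  fixes i j d :: int
  assumes "0 < d"
  shows "i \<le> \<lfloor>real_of_int j / real_of_int d\<rfloor> \<longleftrightarrow> d * i \<le> j"
proof -
  have "i \<le> \<lfloor>real_of_int j / real_of_int d\<rfloor> \<longleftrightarrow> real_of_int i * real_of_int d \<le> real_of_int j"
    using assms by (simp add: le_floor_iff pos_le_divide_eq)
  also have "\<dots> \<longleftrightarrow> d * i \<le> j" by (metis of_int_le_iff of_int_mult mult.commute)
  finally show ?thesis .
qed

lemma sum_ibinom_support:
  fixes g :: "int \<Rightarrow> real" and k B :: int
  assumes "0 \<le> k"
  shows "(\<Sum>i\<le>nat B. g (int i) * real_of_int (ibinom (B - k * int i) (int i))) =
    (\<Sum>i\<in>{0..\<lfloor>real_of_int B / real_of_int (k + 1)\<rfloor>}. g i * real_of_int (ibinom (B - k * i) i))"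
proof -
  define U where "U = \<lfloor>real_of_int B / real_of_int (k + 1)\<rfloor>"
  have support: "i \<le> U \<longleftrightarrow> i \<le> B - k * i" for i
    using assms le_floor_divide_iff[of "k + 1" i B] by (auto simp: U_def algebra_simps)
  have "(\<Sum>i\<le>nat B. g (int i) * real_of_int (ibinom (B - k * int i) (int i))) =
      (\<Sum>i\<in>int ` {..nat B}. g i * real_of_int (ibinom (B - k * i) i))"
    by (simp add: sum.reindex)
  also have "\<dots> = (\<Sum>i\<in>{0..U}. g i * real_of_int (ibinom (B - k * i) i))"
  proof (rule sum.mono_neutral_right)
    show "{0..U} \<subseteq> int ` {..nat B}"
    proof
      fix i assume "i \<in> {0..U}"
      with support mult_nonneg_nonneg[OF assms, of i] have "0 \<le> i" "i \<le> B" by auto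
      then show "i \<in> int ` {..nat B}" by (auto intro!: image_eqI[where x = "nat i"])
    qed
  qed (auto simp: support ibinom_eq_0)
  finally show ?thesis unfolding U_def .
qed

lemma card_L_eq_sum_ballot_number:
  assumes "1 \<le> k" "k * m - r \<le> n" "b \<le> n"
  shows "real (card (L k r a b m n)) =
    (\<Sum>i\<in>{0..\<lfloor>real_of_int (b + r - k * a) / real_of_int (k + 1)\<rfloor>}.
       (-1) ^ nat i * real_of_int (ballot_number k r (a + i) m n)
       * real_of_int (ibinom (b + r - k * (a + i)) i))"
proof -
  define B where "B = b + r - k * a"
  have "int (card (L k r a b m n)) =
      (\<Sum>i\<le>nat B. (-1) ^ i * ibinom (B - k * int i) (int i) * ballot_number k r (a + int i) m n)"
    using card_L_alternating_sum[where M = "Suc (nat B)"] assms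
    by (simp add: B_def lessThan_Suc_atMost card_L_from_line)
  then have "real (card (L k r a b m n)) =
      real_of_int (\<Sum>i\<le>nat B. (-1) ^ i * ibinom (B - k * int i) (int i) *
        ballot_number k r (a + int i) m n)"
    by (metis of_int_of_nat_eq)
  also have "\<dots> = (\<Sum>i\<le>nat B. (-1) ^ nat (int i) * real_of_int (ballot_number k r (a + int i) m n)
      * real_of_int (ibinom (B - k * int i) (int i)))"
    by (simp add: mult_ac)
  also have "\<dots> = (\<Sum>i\<in>{0..\<lfloor>real_of_int B / real_of_int (k + 1)\<rfloor>}.
      (-1) ^ nat i * real_of_int (ballot_number k r (a + i) m n) * real_of_int (ibinom (B - k * i) i))"
    using assms(1)
    by (intro sum_ibinom_support[where g = "\<lambda>i. (-1) ^ nat i * real_of_int (ballot_number k r (a + i) m n)"])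
      simp
  finally have expansion: "real (card (L k r a b m n)) =
    (\<Sum>i\<in>{0..\<lfloor>real_of_int B / real_of_int (k + 1)\<rfloor>}.
      (-1) ^ nat i * real_of_int (ballot_number k r (a + i) m n) * real_of_int (ibinom (B - k * i) i))" .
  have shift: "b + r - k * (a + i) = B - k * i" for i by (simp add: B_def algebra_simps)
  show ?thesis
    unfolding B_def[symmetric] shift by (rule expansion)
qed

theorem theorem2p1:
  fixes k r a b m n :: int
  assumes "k \<ge> 1" and "0 \<le> a" and "a \<le> m" and "n \<ge> k * m - r"
    and "max 0 (k * a - r) \<le> b" and "b \<le> n"
  shows "real (card (L k r a b m n)) =
    (\<Sum>i\<in>{0..\<lfloor>real_of_int (b + r - k * a) / real_of_int (k + 1)\<rfloor>}.
       (-1) ^ nat i * (real_of_int (n + r + 1 - k * m) / real_of_int (n + r + 1 - k * (a + i)))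
       * real_of_int (ibinom (m + n + r - (k + 1) * (a + i)) (m - a - i))
       * real_of_int (ibinom (b + r - k * (a + i)) i))"
proof -
  have start_above_line: "k * (a + i) - r \<le> n"
    if "i \<in> {0..\<lfloor>real_of_int (b + r - k * a) / real_of_int (k + 1)\<rfloor>}" for i
    using that le_floor_divide_iff[of "k + 1" i "b + r - k * a"] assms(1,6)
    by (auto simp: algebra_simps)
  show ?thesis
    unfolding card_L_eq_sum_ballot_number[OF assms(1,4,6)]
    by (intro sum.cong refl) (simp add: start_above_line ballot_number_eq_quotient diff_diff_eq mult_ac)
qed

end
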